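(* Let $d\ge 2$ and $\ell\ge 3$. The cyclic Kautz digraph $CK(d,\ell)$ is isomorphic to the line digraph of the subKautz digraph $sK(d,\ell-1)$, that is, $CK(d,\ell)\cong L(sK(d,\ell-1))$, via the map sending the arc $(x_1x_2\ldots x_{\ell-1},\,x_2\ldots x_{\ell-1}x_\ell)$ of $sK(d,\ell-1)$ to the vertex $x_1x_2\ldots x_\ell$ of $CK(d,\ell)$.
   Context: All words are over the alphabet $\mathbb Z_{d+1}=\{0,1,\ldots,d\}$. The subKautz digraph $sK(d,\ell)$ ($d,\ell\ge 2$) has vertex set $\{x_1x_2\ldots x_\ell : x_i\neq x_{i+1},\ i=1,\ldots,\ell-1\}$ and arcs $x_1x_2\ldots x_\ell\to x_2\ldots x_\ell x_{\ell+1}$ for every $x_{\ell+1}\in\mathbb Z_{d+1}$ with $x_{\ell+1}\neq x_1$ and $x_{\ell+1}\neq x_\ell$. The cyclic Kautz digraph $CK(d,\ell)$ has vertex set $\{x_1\ldots x_\ell : x_i\neq x_{i+1}\ (i=1,\ldots,\ell-1),\ x_\ell\neq x_1\}$ and arcs $x_1x_2\ldots x_\ell\to x_2\ldots x_\ell y$ for every $y\in\mathbb Z_{d+1}$ with $y\neq x_2$ and $y\neq x_\ell$. The line digraph $L(G)$ of a digraph $G$ has as vertices the arcs of $G$, with $(u,v)$ adjacent to $(w,z)$ in $L(G)$ iff $v=w$. *)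

theory Defs
  imports Main
begin

text \<open>Words over Z_{d+1} = {0..d} are lists of naturals with entries at most d.
A digraph is a pair (vertex set, arc set), arcs being ordered pairs of vertices.\<close>

type_synonym 'a digraph = "'a set \<times> ('a \<times> 'a) set"

definition word :: "nat \<Rightarrow> nat \<Rightarrow> nat list \<Rightarrow> bool" where
  "word d l xs \<longleftrightarrow> length xs = l \<and> (\<forall>i<l. xs ! i \<le> d)
      \<and> (\<forall>i. i + 1 < l \<longrightarrow> xs ! i \<noteq> xs ! (i + 1))"

definition subKautz :: "nat \<Rightarrow> nat \<Rightarrow> nat list digraph" where
  "subKautz d l =
    ({xs. word d l xs},
     {(xs, ys). word d l xs \<and> (\<exists>y. y \<le> d \<and> y \<noteq> xs ! 0 \<and> y \<noteq> xs ! (l - 1)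
                                   \<and> ys = tl xs @ [y])})"

definition cycKautz :: "nat \<Rightarrow> nat \<Rightarrow> nat list digraph" where
  "cycKautz d l =
    ({xs. word d l xs \<and> xs ! (l - 1) \<noteq> xs ! 0},
     {(xs, ys). word d l xs \<and> xs ! (l - 1) \<noteq> xs ! 0
        \<and> (\<exists>y. y \<le> d \<and> y \<noteq> xs ! 1 \<and> y \<noteq> xs ! (l - 1) \<and> ys = tl xs @ [y])})"

definition line_digraph :: "'a digraph \<Rightarrow> ('a \<times> 'a) digraph" where
  "line_digraph G = (snd G, {(a, b). a \<in> snd G \<and> b \<in> snd G \<and> snd a = fst b})"

definition digraph_iso :: "('a \<Rightarrow> 'b) \<Rightarrow> 'a digraph \<Rightarrow> 'b digraph \<Rightarrow> bool" where
  "digraph_iso f G H \<longleftrightarrow> bij_betw f (fst G) (fst H)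
     \<and> (\<forall>u\<in>fst G. \<forall>v\<in>fst G. (u, v) \<in> snd G \<longleftrightarrow> (f u, f v) \<in> snd H)"

definition arc_to_word :: "nat list \<times> nat list \<Rightarrow> nat list" where
  "arc_to_word a = fst a @ [last (snd a)]"

end

theory Submission
  imports Defs
begin

text \<open>An arc of \<open>sK(d,m)\<close> is determined by its tail \<open>x\<^sub>1\<dots>x\<^sub>m\<close> and the appended letter
\<open>y\<close>, and the conditions on \<open>y\<close> (\<open>y \<noteq> x\<^sub>m\<close> and \<open>y \<noteq> x\<^sub>1\<close>) are exactly those making
\<open>x\<^sub>1\<dots>x\<^sub>m y\<close> a vertex of \<open>CK(d,m+1)\<close>; so \<open>arc_to_word\<close> is a bijection from the arcs of
\<open>sK(d,m)\<close> onto the vertices of \<open>CK(d,m+1)\<close>. Two consecutive arcs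
\<open>(x\<^sub>1\<dots>x\<^sub>m, x\<^sub>2\<dots>x\<^sub>m y)\<close>, \<open>(x\<^sub>2\<dots>x\<^sub>m y, x\<^sub>3\<dots>x\<^sub>m y z)\<close> are sent to words differing by
one shift, and the conditions \<open>z \<noteq> x\<^sub>2\<close>, \<open>z \<noteq> y\<close> on the second arc are those on an arc of
\<open>CK(d,m+1)\<close>. The argument only needs \<open>\<ell> \<ge> 2\<close>, and no bound on \<open>d\<close>.\<close>

lemma word_snoc_iff:
  assumes "0 < m"
  shows "word d (Suc m) (xs @ [y]) \<longleftrightarrow> word d m xs \<and> y \<le> d \<and> y \<noteq> xs ! (m - 1)"
proof
  assume w: "word d (Suc m) (xs @ [y])"
  then have len: "length xs = m" by (simp add: word_def)
  have le: "(xs @ [y]) ! i \<le> d" if "i < Suc m" for i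
    using w that by (simp add: word_def)
  have ne: "(xs @ [y]) ! i \<noteq> (xs @ [y]) ! (i + 1)" if "i + 1 < Suc m" for i
    using w that by (simp add: word_def)
  have "word d m xs"
    unfolding word_def
  proof (intro conjI allI impI)
    fix i assume "i < m"
    then show "xs ! i \<le> d" using le[of i] len by (simp add: nth_append)
  next
    fix i assume "i + 1 < m"
    then show "xs ! i \<noteq> xs ! (i + 1)" using ne[of i] len by (simp add: nth_append)
  qed (fact len)
  moreover have "y \<le> d" using le[of m] len by (simp add: nth_append)
  moreover have "y \<noteq> xs ! (m - 1)" using ne[of "m - 1"] len assms by (simp add: nth_append)
  ultimately show "word d m xs \<and> y \<le> d \<and> y \<noteq> xs ! (m - 1)" by blast
next
  assume h: "word d m xs \<and> y \<le> d \<and> y \<noteq> xs ! (m - 1)"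
  then have len: "length xs = m" by (simp add: word_def)
  have ne: "(xs @ [y]) ! i \<noteq> (xs @ [y]) ! (i + 1)" if "i + 1 < Suc m" for i
  proof (cases "i + 1 < m")
    case True
    then show ?thesis using h len by (auto simp: nth_append word_def)
  next
    case False
    then have "i = m - 1" using that by simp
    then show ?thesis using h len assms by (simp add: nth_append)
  qed
  show "word d (Suc m) (xs @ [y])"
    unfolding word_def
    using h len ne by (auto simp: nth_append word_def less_Suc_eq)
qed

lemma subKautz_arc_iff:
  "a \<in> snd (subKautz d m) \<longleftrightarrow>
     (\<exists>xs y. a = (xs, tl xs @ [y]) \<and> word d m xs \<and> y \<le> d \<and> y \<noteq> xs ! 0 \<and> y \<noteq> xs ! (m - 1))"
  unfolding subKautz_def by auto

lemma arc_to_word_simp [simp]: "arc_to_word (xs, tl xs @ [y]) = xs @ [y]"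
  by (simp add: arc_to_word_def)

lemma cycKautz_vertex_snoc_iff:
  assumes "0 < m" and "length xs = m"
  shows "xs @ [y] \<in> fst (cycKautz d (Suc m)) \<longleftrightarrow>
           word d m xs \<and> y \<le> d \<and> y \<noteq> xs ! 0 \<and> y \<noteq> xs ! (m - 1)"
  using assms word_snoc_iff[OF assms(1)] by (auto simp: cycKautz_def nth_append)

lemma bij_betw_arc_to_word:
  assumes "0 < m"
  shows "bij_betw arc_to_word (snd (subKautz d m)) (fst (cycKautz d (Suc m)))"
proof (rule bij_betw_imageI)
  show "inj_on arc_to_word (snd (subKautz d m))"
    by (rule inj_onI) (auto simp: subKautz_arc_iff)
  show "arc_to_word ` snd (subKautz d m) = fst (cycKautz d (Suc m))"
  proof (intro equalityI subsetI)
    fix z assume "z \<in> arc_to_word ` snd (subKautz d m)"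
    then obtain xs y where "z = xs @ [y]" "word d m xs" "y \<le> d" "y \<noteq> xs ! 0" "y \<noteq> xs ! (m - 1)"
      by (auto simp: subKautz_arc_iff)
    then show "z \<in> fst (cycKautz d (Suc m))"
      using cycKautz_vertex_snoc_iff[OF assms] by (simp add: word_def)
  next
    fix z assume z: "z \<in> fst (cycKautz d (Suc m))"
    then have "length z = Suc m" by (simp add: cycKautz_def word_def)
    then obtain xs y where zxs: "z = xs @ [y]" and len: "length xs = m"
      by (metis length_Suc_conv_rev)
    then have "(xs, tl xs @ [y]) \<in> snd (subKautz d m)"
      using z cycKautz_vertex_snoc_iff[OF assms len] by (auto simp: subKautz_arc_iff)
    then show "z \<in> arc_to_word ` snd (subKautz d m)"
      using zxs by (metis arc_to_word_simp image_eqI)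
  qed
qed

lemma line_subKautz_arc_iff_cycKautz_arc:
  assumes "0 < m" and "a \<in> snd (subKautz d m)" and "b \<in> snd (subKautz d m)"
  shows "(a, b) \<in> snd (line_digraph (subKautz d m)) \<longleftrightarrow>
           (arc_to_word a, arc_to_word b) \<in> snd (cycKautz d (Suc m))"
proof -
  obtain xs y where a: "a = (xs, tl xs @ [y])" and xs: "word d m xs"
    and y: "y \<le> d" "y \<noteq> xs ! 0" "y \<noteq> xs ! (m - 1)"
    using assms(2) by (auto simp: subKautz_arc_iff)
  obtain xs' y' where b: "b = (xs', tl xs' @ [y'])" and xs': "word d m xs'"
    and y': "y' \<le> d" "y' \<noteq> xs' ! 0" "y' \<noteq> xs' ! (m - 1)"
    using assms(3) by (auto simp: subKautz_arc_iff)
  have len: "length xs = m" "length xs' = m" using xs xs' by (auto simp: word_def)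
  have vertex: "xs @ [y] \<in> fst (cycKautz d (Suc m))"
    using cycKautz_vertex_snoc_iff[OF assms(1) len(1)] xs y by simp
  have tl_snoc: "tl (xs @ [y]) = tl xs @ [y]" using len assms(1) by (cases xs) auto
  have cyc_arc_iff: "(xs @ [y], xs' @ [y']) \<in> snd (cycKautz d (Suc m)) \<longleftrightarrow>
      (\<exists>z. z \<le> d \<and> z \<noteq> (xs @ [y]) ! 1 \<and> z \<noteq> y \<and> xs' @ [y'] = tl xs @ [y, z])"
    using vertex tl_snoc len(1) by (simp add: cycKautz_def nth_append)
  show ?thesis
  proof
    assume "(a, b) \<in> snd (line_digraph (subKautz d m))"
    then have shift: "xs' = tl xs @ [y]" using a b by (simp add: line_digraph_def)
    have "y' \<noteq> (xs @ [y]) ! 1"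
      using y'(2) shift len assms(1) by (cases xs) (auto simp: nth_append split: if_splits)
    moreover have "y' \<noteq> y" using y'(3) shift len by (simp add: nth_append)
    ultimately show "(arc_to_word a, arc_to_word b) \<in> snd (cycKautz d (Suc m))"
      using a b shift y' cyc_arc_iff by auto
  next
    assume "(arc_to_word a, arc_to_word b) \<in> snd (cycKautz d (Suc m))"
    then have "xs' = tl xs @ [y]" using a b cyc_arc_iff by auto
    then show "(a, b) \<in> snd (line_digraph (subKautz d m))"
      using assms(2,3) a b by (simp add: line_digraph_def)
  qed
qed

theorem mainTheorem1:
  fixes d l :: nat
  assumes "d \<ge> 2" and "l \<ge> 3"
  shows "digraph_iso arc_to_word (line_digraph (subKautz d (l - 1))) (cycKautz d l)"
proof -
  obtain m where l: "l = Suc m" and pos: "0 < m"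
    using assms(2) by (cases l) auto
  show ?thesis
    unfolding digraph_iso_def l diff_Suc_1
    using bij_betw_arc_to_word[OF pos, of d] line_subKautz_arc_iff_cycKautz_arc[OF pos, of _ d]
    by (simp add: line_digraph_def)
qed

end
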